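(* Let $\mathcal{A}$ be a complex algebra with a differential calculus $(\Omega(\mathcal{A}),d)$, and let $\mathcal{E}=\Omega^1(\mathcal{A})$, assumed to be a finitely generated projective right $\mathcal{A}$-module. Let $\wedge:\mathcal{E}\otimes_{\mathcal{A}}\mathcal{E}\to\Omega^2(\mathcal{A})$ be the map induced by the product of the calculus. Suppose the short exact sequence of right $\mathcal{A}$-modules $$0\rightarrow \ker(\wedge)\rightarrow \mathcal{E}\otimes_{\mathcal{A}}\mathcal{E}\rightarrow \mathrm{Ran}(\wedge)=\Omega^2(\mathcal{A})$$ splits. Then there exists a torsionless connection $\nabla_0$ on $\mathcal{E}$.
   Context: A differential calculus on a complex algebra $\mathcal{A}$ is a pair $(\Omega(\mathcal{A}),d)$ where $\Omega(\mathcal{A})=\oplus_{j\ge 0}\Omega^j(\mathcal{A})$, $\Omega^0(\mathcal{A})=\mathcal{A}$, each $\Omega^j(\mathcal{A})$ is an $\mathcal{A}$-$\mathcal{A}$-bimodule, there is an $\mathcal{A}$-bimodule map $\wedge:\Omega(\mathcal{A})\otimes_{\mathcal{A}}\Omega(\mathcal{A})\to\Omega(\mathcal{A})$ with $\wedge(\Omega^j\otimes_{\mathcal{A}}\Omega^k)\subseteq\Omega^{j+k}$, and maps $d:\Omega^j(\mathcal{A})\to\Omega^{j+1}(\mathcal{A})$ with $d^2=0$ and $d(\omega\wedge\eta)=d\omega\wedge\eta+(-1)^{\deg\omega}\omega\wedge d\eta$; moreover $\Omega^j(\mathcal{A})$ is the right $\mathcal{A}$-linear span of elements $da_0\wedge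 da_1\wedge\cdots\wedge da_{j-1}$. A (right) connection on $\mathcal{E}=\Omega^1(\mathcal{A})$ is a $\mathbb{C}$-linear map $\nabla:\mathcal{E}\to\mathcal{E}\otimes_{\mathcal{A}}\mathcal{E}$ with $\nabla(\omega a)=\nabla(\omega)a+\omega\otimes_{\mathcal{A}}da$ for all $\omega\in\mathcal{E}$, $a\in\mathcal{A}$. Its torsion is $T_\nabla=\wedge\circ\nabla+d:\mathcal{E}\to\Omega^2(\mathcal{A})$, and $\nabla$ is torsionless if $T_\nabla=0$. *)

theory Defs
  imports Complex_Main
begin

text \<open>A complex algebra: a unital ring 'a together with a unital ring homomorphism
  cemb from the complex numbers into the centre of 'a (scalar z acts as cemb z).\<close>
definition complex_algebra :: "(complex \<Rightarrow> 'a::ring_1) \<Rightarrow> bool" where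
  "complex_algebra cemb \<longleftrightarrow>
     cemb 1 = 1 \<and>
     (\<forall>z w. cemb (z + w) = cemb z + cemb w) \<and>
     (\<forall>z w. cemb (z * w) = cemb z * cemb w) \<and>
     (\<forall>z a. cemb z * a = a * cemb z)"

definition bimodule ::
  "(complex \<Rightarrow> 'a::ring_1) \<Rightarrow> ('a \<Rightarrow> 'm::ab_group_add \<Rightarrow> 'm) \<Rightarrow> ('m \<Rightarrow> 'a \<Rightarrow> 'm) \<Rightarrow> bool" where
  "bimodule cemb lact ract \<longleftrightarrow>
     (\<forall>a b m. lact (a * b) m = lact a (lact b m)) \<and>
     (\<forall>m. lact 1 m = m) \<and>
     (\<forall>a b m. lact (a + b) m = lact a m + lact b m) \<and>
     (\<forall>a m n. lact a (m + n) = lact a m + lact a n) \<and>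
     (\<forall>a b m. ract m (a * b) = ract (ract m a) b) \<and>
     (\<forall>m. ract m 1 = m) \<and>
     (\<forall>a b m. ract m (a + b) = ract m a + ract m b) \<and>
     (\<forall>a m n. ract (m + n) a = ract m a + ract n a) \<and>
     (\<forall>a b m. lact a (ract m b) = ract (lact a m) b) \<and>
     (\<forall>z m. lact (cemb z) m = ract m (cemb z))"

definition sub_bimodule ::
  "('a \<Rightarrow> 'm::ab_group_add \<Rightarrow> 'm) \<Rightarrow> ('m \<Rightarrow> 'a \<Rightarrow> 'm) \<Rightarrow> 'm set \<Rightarrow> bool" where
  "sub_bimodule lact ract M \<longleftrightarrow>
     0 \<in> M \<and> (\<forall>x\<in>M. \<forall>y\<in>M. x + y \<in> M) \<and> (\<forall>x\<in>M. - x \<in> M) \<and>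
     (\<forall>x\<in>M. \<forall>a. lact a x \<in> M) \<and> (\<forall>x\<in>M. \<forall>a. ract x a \<in> M)"

text \<open>The whole of Omega(A) is modelled by one bimodule 'w; deg j is the summand
  Omega^j(A).  iota identifies A with Omega^0(A).  The product wedge is a bimodule map
  Omega(A) \<otimes>_A Omega(A) \<rightarrow> Omega(A), i.e. a biadditive A-balanced map compatible with
  both actions; on Omega^0 = A it is the module action.\<close>
definition diff_calculus ::
  "(complex \<Rightarrow> 'a::ring_1) \<Rightarrow> ('a \<Rightarrow> 'w::ab_group_add \<Rightarrow> 'w) \<Rightarrow> ('w \<Rightarrow> 'a \<Rightarrow> 'w) \<Rightarrow>
   (nat \<Rightarrow> 'w set) \<Rightarrow> ('a \<Rightarrow> 'w) \<Rightarrow> ('w \<Rightarrow> 'w \<Rightarrow> 'w) \<Rightarrow> ('w \<Rightarrow> 'w) \<Rightarrow> bool" where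
  "diff_calculus cemb lw rw deg iota wedge d \<longleftrightarrow>
     complex_algebra cemb \<and>
     bimodule cemb lw rw \<and>
     \<comment> \<open>graded pieces are sub-bimodules and Omega is their direct sum\<close>
     (\<forall>j. sub_bimodule lw rw (deg j)) \<and>
     (\<forall>w. \<exists>f N. (\<forall>j. f j \<in> deg j) \<and> w = (\<Sum>j<N. f j)) \<and>
     (\<forall>f N. (\<forall>j. f j \<in> deg j) \<and> (\<Sum>j<N. f j) = 0 \<longrightarrow> (\<forall>j<N. f j = 0)) \<and>
     \<comment> \<open>Omega^0 = A as bimodules\<close>
     bij_betw iota UNIV (deg 0) \<and>
     (\<forall>a b. iota (a + b) = iota a + iota b) \<and>
     (\<forall>a b. iota (a * b) = lw a (iota b)) \<and>
     (\<forall>a b. iota (a * b) = rw (iota a) b) \<and>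
     \<comment> \<open>the product\<close>
     (\<forall>x y z. wedge (x + y) z = wedge x z + wedge y z) \<and>
     (\<forall>x y z. wedge x (y + z) = wedge x y + wedge x z) \<and>
     (\<forall>x y a. wedge (rw x a) y = wedge x (lw a y)) \<and>
     (\<forall>x y a. wedge (lw a x) y = lw a (wedge x y)) \<and>
     (\<forall>x y a. wedge x (rw y a) = rw (wedge x y) a) \<and>
     (\<forall>j k x y. x \<in> deg j \<longrightarrow> y \<in> deg k \<longrightarrow> wedge x y \<in> deg (j + k)) \<and>
     (\<forall>a w. wedge (iota a) w = lw a w) \<and>
     (\<forall>a w. wedge w (iota a) = rw w a) \<and>
     \<comment> \<open>the differential: complex linear, degree one, d^2 = 0, graded Leibniz rule\<close>
     (\<forall>x y. d (x + y) = d x + d y) \<and>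
     (\<forall>z x. d (rw x (cemb z)) = rw (d x) (cemb z)) \<and>
     (\<forall>j x. x \<in> deg j \<longrightarrow> d x \<in> deg (Suc j)) \<and>
     (\<forall>x. d (d x) = 0) \<and>
     (\<forall>j x y. x \<in> deg j \<longrightarrow>
        d (wedge x y) = wedge (d x) y + (if even j then wedge x (d y) else - wedge x (d y))) \<and>
     \<comment> \<open>Omega^j is the right A-span of the products da_0 \<and> ... \<and> da_(j-1)\<close>
     (\<forall>j. \<forall>w\<in>deg j. \<exists>L :: ('a list \<times> 'a) list.
        (\<forall>p\<in>set L. length (fst p) = j) \<and>
        w = sum_list (map (\<lambda>p. rw (foldr (\<lambda>a acc. wedge (d (iota a)) acc) (fst p) (iota 1)) (snd p)) L))"

text \<open>E (a right A-submodule of 'w) is a direct summand of a free module A^n: there are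
  right-linear maps iE : E \<rightarrow> A^n and pE : A^n \<rightarrow> E with pE o iE = id.  Vectors of A^n are
  functions nat \<Rightarrow> 'a vanishing from n on.\<close>
definition fg_projective_right ::
  "('w::ab_group_add \<Rightarrow> 'a::ring_1 \<Rightarrow> 'w) \<Rightarrow> 'w set \<Rightarrow> bool" where
  "fg_projective_right ract E \<longleftrightarrow>
     (\<exists>(n::nat) (iE :: 'w \<Rightarrow> nat \<Rightarrow> 'a) (pE :: (nat \<Rightarrow> 'a) \<Rightarrow> 'w).
        (\<forall>x\<in>E. \<forall>i\<ge>n. iE x i = 0) \<and>
        (\<forall>x\<in>E. \<forall>y\<in>E. iE (x + y) = (\<lambda>i. iE x i + iE y i)) \<and>
        (\<forall>x\<in>E. \<forall>a. iE (ract x a) = (\<lambda>i. iE x i * a)) \<and>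
        (\<forall>v. (\<forall>i\<ge>n. v i = 0) \<longrightarrow> pE v \<in> E) \<and>
        (\<forall>v u. (\<forall>i\<ge>n. v i = 0) \<longrightarrow> (\<forall>i\<ge>n. u i = 0) \<longrightarrow>
            pE (\<lambda>i. v i + u i) = pE v + pE u) \<and>
        (\<forall>v a. (\<forall>i\<ge>n. v i = 0) \<longrightarrow> pE (\<lambda>i. v i * a) = ract (pE v) a) \<and>
        (\<forall>x\<in>E. pE (iE x) = x))"

inductive_set zspan :: "('b \<Rightarrow> int) set \<Rightarrow> ('b \<Rightarrow> int) set" for S where
  zspan_zero: "(\<lambda>_. 0) \<in> zspan S"
| zspan_gen: "s \<in> S \<Longrightarrow> s \<in> zspan S"
| zspan_add: "f \<in> zspan S \<Longrightarrow> g \<in> zspan S \<Longrightarrow> (\<lambda>q. f q + g q) \<in> zspan S"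
| zspan_neg: "f \<in> zspan S \<Longrightarrow> (\<lambda>q. - f q) \<in> zspan S"

definition delta :: "'b \<Rightarrow> 'b \<Rightarrow> int" where
  "delta b = (\<lambda>q. if q = b then 1 else 0)"

text \<open>Defining relations of M \<otimes>_A N (here M = N = E) in the free abelian group on E \<times> E.\<close>
definition tensor_rels ::
  "('a \<Rightarrow> 'w \<Rightarrow> 'w) \<Rightarrow> ('w::ab_group_add \<Rightarrow> 'a \<Rightarrow> 'w) \<Rightarrow> 'w set \<Rightarrow> ('w \<times> 'w \<Rightarrow> int) set" where
  "tensor_rels lact ract E =
     {(\<lambda>q. delta (x + x', y) q - delta (x, y) q - delta (x', y) q) | x x' y. x \<in> E \<and> x' \<in> E \<and> y \<in> E} \<union>
     {(\<lambda>q. delta (x, y + y') q - delta (x, y) q - delta (x, y') q) | x y y'. x \<in> E \<and> y \<in> E \<and> y' \<in> E} \<union>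
     {(\<lambda>q. delta (ract x a, y) q - delta (x, lact a y) q) | x y a. x \<in> E \<and> y \<in> E}"

definition tensor_lift ::
  "('t::ab_group_add \<Rightarrow> 'a::ring_1 \<Rightarrow> 't) \<Rightarrow> ('w \<Rightarrow> 'w \<Rightarrow> 't) \<Rightarrow> ('w \<times> 'w \<Rightarrow> int) \<Rightarrow> 't" where
  "tensor_lift tact tens f = (\<Sum>q\<in>{q. f q \<noteq> 0}. tact (tens (fst q) (snd q)) (of_int (f q)))"

text \<open>('t, tens) is the tensor product E \<otimes>_A E with its induced A-bimodule structure:
  the canonical map from (free abelian group on E \<times> E) / (relations) to 't is bijective.\<close>
definition is_tensor_product ::
  "(complex \<Rightarrow> 'a::ring_1) \<Rightarrow> ('a \<Rightarrow> 'w::ab_group_add \<Rightarrow> 'w) \<Rightarrow> ('w \<Rightarrow> 'a \<Rightarrow> 'w) \<Rightarrow> 'w set \<Rightarrow>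
   ('a \<Rightarrow> 't::ab_group_add \<Rightarrow> 't) \<Rightarrow> ('t \<Rightarrow> 'a \<Rightarrow> 't) \<Rightarrow> ('w \<Rightarrow> 'w \<Rightarrow> 't) \<Rightarrow> bool" where
  "is_tensor_product cemb lw rw E tlact tact tens \<longleftrightarrow>
     bimodule cemb tlact tact \<and>
     (\<forall>t. \<exists>f. finite {q. f q \<noteq> 0} \<and> {q. f q \<noteq> 0} \<subseteq> E \<times> E \<and> t = tensor_lift tact tens f) \<and>
     (\<forall>f. finite {q. f q \<noteq> 0} \<and> {q. f q \<noteq> 0} \<subseteq> E \<times> E \<longrightarrow>
        (tensor_lift tact tens f = 0 \<longleftrightarrow> f \<in> zspan (tensor_rels lw rw E))) \<and>
     (\<forall>x\<in>E. \<forall>y\<in>E. \<forall>a. tact (tens x y) a = tens x (rw y a)) \<and>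
     (\<forall>x\<in>E. \<forall>y\<in>E. \<forall>a. tlact a (tens x y) = tens (lw a x) y)"

definition induced_wedge ::
  "'w set \<Rightarrow> ('w \<Rightarrow> 'w \<Rightarrow> 't::ab_group_add) \<Rightarrow> ('w \<Rightarrow> 'w \<Rightarrow> 'w::ab_group_add) \<Rightarrow> ('t \<Rightarrow> 'w) \<Rightarrow> bool" where
  "induced_wedge E tens wedge wt \<longleftrightarrow>
     (\<forall>s t. wt (s + t) = wt s + wt t) \<and> (\<forall>x\<in>E. \<forall>y\<in>E. wt (tens x y) = wedge x y)"

text \<open>The sequence 0 \<rightarrow> ker wt \<rightarrow> E \<otimes>_A E \<rightarrow> Omega^2 of right A-modules splits: there is a
  right A-linear section of wt.\<close>
definition right_split ::
  "('w::ab_group_add \<Rightarrow> 'a \<Rightarrow> 'w) \<Rightarrow> ('t::ab_group_add \<Rightarrow> 'a \<Rightarrow> 't) \<Rightarrow> 'w set \<Rightarrow> ('t \<Rightarrow> 'w) \<Rightarrow> bool" where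
  "right_split rw tact Om2 wt \<longleftrightarrow>
     (\<exists>s :: 'w \<Rightarrow> 't.
        (\<forall>x\<in>Om2. \<forall>y\<in>Om2. s (x + y) = s x + s y) \<and>
        (\<forall>x\<in>Om2. \<forall>a. s (rw x a) = tact (s x) a) \<and>
        (\<forall>x\<in>Om2. wt (s x) = x))"

definition connection ::
  "(complex \<Rightarrow> 'a::ring_1) \<Rightarrow> ('w::ab_group_add \<Rightarrow> 'a \<Rightarrow> 'w) \<Rightarrow> 'w set \<Rightarrow> ('a \<Rightarrow> 'w) \<Rightarrow> ('w \<Rightarrow> 'w) \<Rightarrow>
   ('t::ab_group_add \<Rightarrow> 'a \<Rightarrow> 't) \<Rightarrow> ('w \<Rightarrow> 'w \<Rightarrow> 't) \<Rightarrow> ('w \<Rightarrow> 't) \<Rightarrow> bool" where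
  "connection cemb rw E iota d tact tens nabla \<longleftrightarrow>
     (\<forall>x\<in>E. \<forall>y\<in>E. nabla (x + y) = nabla x + nabla y) \<and>
     (\<forall>x\<in>E. \<forall>z. nabla (rw x (cemb z)) = tact (nabla x) (cemb z)) \<and>
     (\<forall>x\<in>E. \<forall>a. nabla (rw x a) = tact (nabla x) a + tens x (d (iota a)))"

definition torsion :: "('w \<Rightarrow> 'w) \<Rightarrow> ('t \<Rightarrow> 'w::ab_group_add) \<Rightarrow> ('w \<Rightarrow> 't) \<Rightarrow> 'w \<Rightarrow> 'w" where
  "torsion d wt nabla x = wt (nabla x) + d x"

definition torsionless :: "'w set \<Rightarrow> ('w \<Rightarrow> 'w) \<Rightarrow> ('t \<Rightarrow> 'w::ab_group_add) \<Rightarrow> ('w \<Rightarrow> 't) \<Rightarrow> bool" where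
  "torsionless E d wt nabla \<longleftrightarrow> (\<forall>x\<in>E. torsion d wt nabla x = 0)"

end

(* Since E is finitely generated projective, it has a dual basis: x = sum_i e_i c_i(x) with
   right A-linear coordinates c_i.  The Grassmann connection x |-> sum_i e_i (x) d(c_i(x)) is
   then a connection on E.  For any connection nabla the torsion T = wedge o nabla + d is right
   A-linear, and if s is a right A-linear section of wedge onto Omega^2, then nabla - s o T is
   again a connection, with torsion T - wedge (s (T x)) = 0. *)
theory Submission
  imports Defs
begin

lemma bimodule_right_action_additive: "bimodule cemb l r \<Longrightarrow> additive (\<lambda>m. r m a)"
  by unfold_locales (simp add: bimodule_def)

lemma bimodule_right_one: "bimodule cemb l r \<Longrightarrow> r m 1 = m"
  by (simp add: bimodule_def)

lemma bimodule_left_one: "bimodule cemb l r \<Longrightarrow> l 1 m = m"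
  by (simp add: bimodule_def)

lemma bimodule_scalar_additive: "bimodule cemb l r \<Longrightarrow> additive (r m)"
  by unfold_locales (simp add: bimodule_def)

lemma sub_bimodule_sum:
  "sub_bimodule l r M \<Longrightarrow> (\<And>i. i \<in> I \<Longrightarrow> f i \<in> M) \<Longrightarrow> (\<Sum>i\<in>I. f i) \<in> M"
  by (induction I rule: infinite_finite_induct) (auto simp: sub_bimodule_def)

definition dual_basis ::
  "('w::ab_group_add \<Rightarrow> 'a::ring_1 \<Rightarrow> 'w) \<Rightarrow> 'w set \<Rightarrow> nat \<Rightarrow> (nat \<Rightarrow> 'w) \<Rightarrow> ('w \<Rightarrow> nat \<Rightarrow> 'a) \<Rightarrow> bool"
  where "dual_basis ract E n e c \<longleftrightarrow>
    (\<forall>i<n. e i \<in> E) \<and>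
    (\<forall>x\<in>E. x = (\<Sum>i<n. ract (e i) (c x i))) \<and>
    (\<forall>x\<in>E. \<forall>y\<in>E. \<forall>i. c (x + y) i = c x i + c y i) \<and>
    (\<forall>x\<in>E. \<forall>a i. c (ract x a) i = c x i * a)"

lemma truncated_vector_image:
  fixes p :: "(nat \<Rightarrow> 'a::ring_1) \<Rightarrow> 'w::ab_group_add"
  assumes add: "\<forall>v u. (\<forall>i\<ge>n. v i = 0) \<longrightarrow> (\<forall>i\<ge>n. u i = 0) \<longrightarrow> p (\<lambda>i. v i + u i) = p v + p u"
    and right_action: "\<forall>v a. (\<forall>i\<ge>n. v i = 0) \<longrightarrow> p (\<lambda>i. v i * a) = ract (p v) a"
    and "m \<le> n"
  shows "p (\<lambda>k. if k < m then v k else 0) = (\<Sum>i<m. ract (p (\<lambda>k. if k = i then 1 else 0)) (v i))"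
  using \<open>m \<le> n\<close>
proof (induction m)
  case 0
  then show ?case
    using add[rule_format, of "\<lambda>_. 0" "\<lambda>_. 0"] by simp
next
  case (Suc m)
  let ?head = "\<lambda>k. if k < m then v k else 0" and ?unit = "\<lambda>k. if k = m then 1 else 0"
  have "(\<lambda>k. if k < Suc m then v k else 0) = (\<lambda>k. ?head k + ?unit k * v m)"
    by (auto simp: fun_eq_iff less_Suc_eq)
  moreover have "p (\<lambda>k. ?head k + ?unit k * v m) = p ?head + p (\<lambda>k. ?unit k * v m)"
    using add[rule_format, of ?head "\<lambda>k. ?unit k * v m"] Suc.prems by simp
  moreover have "p (\<lambda>k. ?unit k * v m) = ract (p ?unit) (v m)"
    using right_action[rule_format, of ?unit "v m"] Suc.prems by simp
  ultimately show ?case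
    using Suc by simp
qed

lemma fg_projective_right_dual_basis:
  assumes "fg_projective_right ract E"
  obtains n e c where "dual_basis ract E n e c"
proof -
  obtain n :: nat and iE :: "'a \<Rightarrow> nat \<Rightarrow> 'b" and pE :: "(nat \<Rightarrow> 'b) \<Rightarrow> 'a" where
    iE_vanish: "\<forall>x\<in>E. \<forall>i\<ge>n. iE x i = 0" and
    iE_add: "\<forall>x\<in>E. \<forall>y\<in>E. iE (x + y) = (\<lambda>i. iE x i + iE y i)" and
    iE_ract: "\<forall>x\<in>E. \<forall>a. iE (ract x a) = (\<lambda>i. iE x i * a)" and
    pE_in: "\<forall>v. (\<forall>i\<ge>n. v i = 0) \<longrightarrow> pE v \<in> E" and
    pE_add: "\<forall>v u. (\<forall>i\<ge>n. v i = 0) \<longrightarrow> (\<forall>i\<ge>n. u i = 0) \<longrightarrow> pE (\<lambda>i. v i + u i) = pE v + pE u" and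
    pE_ract: "\<forall>v a. (\<forall>i\<ge>n. v i = 0) \<longrightarrow> pE (\<lambda>i. v i * a) = ract (pE v) a" and
    pE_iE: "\<forall>x\<in>E. pE (iE x) = x"
    using assms unfolding fg_projective_right_def by (elim exE conjE) (rule that)
  define e where "e i = pE (\<lambda>k. if k = i then 1 else 0)" for i
  have decomposition: "\<forall>x\<in>E. x = (\<Sum>i<n. ract (e i) (iE x i))"
  proof
    fix x assume "x \<in> E"
    then have "(\<lambda>k. if k < n then iE x k else 0) = iE x"
      using iE_vanish by (auto simp: fun_eq_iff)
    then show "x = (\<Sum>i<n. ract (e i) (iE x i))"
      using truncated_vector_image[OF pE_add pE_ract, of n "iE x"] pE_iE \<open>x \<in> E\<close>
      by (simp add: e_def)
  qed
  have "\<forall>i<n. e i \<in> E"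
    unfolding e_def using pE_in by simp
  moreover have "\<forall>x\<in>E. \<forall>y\<in>E. \<forall>i. iE (x + y) i = iE x i + iE y i"
    using iE_add by simp
  moreover have "\<forall>x\<in>E. \<forall>a i. iE (ract x a) i = iE x i * a"
    using iE_ract by simp
  ultimately have "dual_basis ract E n e iE"
    unfolding dual_basis_def using decomposition by blast
  then show thesis by (rule that)
qed

lemma support_delta [simp]: "{q. delta p q \<noteq> 0} = {p}"
  by (auto simp: delta_def)

locale tensor_square =
  fixes cemb :: "complex \<Rightarrow> 'a::ring_1"
    and lw :: "'a \<Rightarrow> 'w::ab_group_add \<Rightarrow> 'w" and rw :: "'w \<Rightarrow> 'a \<Rightarrow> 'w" and E :: "'w set"
    and tlact :: "'a \<Rightarrow> 't::ab_group_add \<Rightarrow> 't" and tact :: "'t \<Rightarrow> 'a \<Rightarrow> 't"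
    and tens :: "'w \<Rightarrow> 'w \<Rightarrow> 't"
  assumes tensor_product: "is_tensor_product cemb lw rw E tlact tact tens"
    and sub_bimodule: "sub_bimodule lw rw E"
begin

lemma tensor_bimodule: "bimodule cemb tlact tact"
  using tensor_product by (simp add: is_tensor_product_def)

sublocale tact: additive "\<lambda>t. tact t a" for a
  using bimodule_right_action_additive[OF tensor_bimodule] .

sublocale tact_scalar: additive "tact t" for t
  using bimodule_scalar_additive[OF tensor_bimodule] .

lemma tens_right_action: "x \<in> E \<Longrightarrow> y \<in> E \<Longrightarrow> tact (tens x y) a = tens x (rw y a)"
  using tensor_product by (simp add: is_tensor_product_def)

lemma tensor_lift_delta: "tensor_lift tact tens (delta p) = tens (fst p) (snd p)"
  by (simp add: tensor_lift_def delta_def bimodule_right_one[OF tensor_bimodule])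

lemma tensor_lift_uminus: "tensor_lift tact tens (\<lambda>q. - f q) = - tensor_lift tact tens f"
  by (simp add: tensor_lift_def tact_scalar.minus sum_negf)

lemma tensor_lift_add:
  assumes "finite {q. f q \<noteq> 0}" "finite {q. g q \<noteq> 0}"
  shows "tensor_lift tact tens (\<lambda>q. f q + g q) = tensor_lift tact tens f + tensor_lift tact tens g"
proof -
  let ?S = "{q. f q \<noteq> 0} \<union> {q. g q \<noteq> 0}"
  let ?h = "\<lambda>q k. tact (tens (fst q) (snd q)) (of_int k)"
  have lift_on_S: "tensor_lift tact tens h = (\<Sum>q\<in>?S. ?h q (h q))"
    if "{q. h q \<noteq> 0} \<subseteq> ?S" for h
    unfolding tensor_lift_def using assms that
    by (intro sum.mono_neutral_left) (auto simp: tact_scalar.zero)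
  have "tensor_lift tact tens (\<lambda>q. f q + g q) = (\<Sum>q\<in>?S. ?h q (f q + g q))"
    by (rule lift_on_S) auto
  then show ?thesis
    using lift_on_S[of f] lift_on_S[of g]
    by (simp add: tact_scalar.add sum.distrib)
qed

lemma tensor_lift_diff:
  assumes "finite {q. f q \<noteq> 0}" "finite {q. g q \<noteq> 0}"
  shows "tensor_lift tact tens (\<lambda>q. f q - g q) = tensor_lift tact tens f - tensor_lift tact tens g"
  using tensor_lift_add[of f "\<lambda>q. - g q"] assms by (simp add: tensor_lift_uminus)

lemma tensor_lift_delta_diff:
  "tensor_lift tact tens (\<lambda>q. delta p q - delta p' q) = tens (fst p) (snd p) - tens (fst p') (snd p')"
  by (simp add: tensor_lift_diff tensor_lift_delta)

lemma tensor_lift_delta_diff3: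
  "tensor_lift tact tens (\<lambda>q. delta p q - delta p' q - delta p'' q) =
    tens (fst p) (snd p) - tens (fst p') (snd p') - tens (fst p'') (snd p'')"
proof -
  have "finite {q. delta p q - delta p' q \<noteq> 0}"
    by (rule finite_subset[of _ "{p, p'}"]) (auto simp: delta_def)
  then show ?thesis
    using tensor_lift_diff[of "\<lambda>q. delta p q - delta p' q" "delta p''"]
    by (simp add: tensor_lift_delta_diff tensor_lift_delta)
qed

lemma tensor_lift_relation:
  assumes "f \<in> tensor_rels lw rw E"
  shows "tensor_lift tact tens f = 0"
proof -
  have "\<exists>P. finite P \<and> P \<subseteq> E \<times> E \<and> {q. f q \<noteq> 0} \<subseteq> P"
    using assms sub_bimodule unfolding tensor_rels_def sub_bimodule_def
  proof (elim UnE CollectE exE conjE)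
    fix x x' y assume "f = (\<lambda>q. delta (x + x', y) q - delta (x, y) q - delta (x', y) q)"
      and "x \<in> E" "x' \<in> E" "y \<in> E" "\<forall>x\<in>E. \<forall>y\<in>E. x + y \<in> E"
    then show ?thesis
      by (intro exI[of _ "{(x + x', y), (x, y), (x', y)}"]) (auto simp: delta_def)
  next
    fix x y y' assume "f = (\<lambda>q. delta (x, y + y') q - delta (x, y) q - delta (x, y') q)"
      and "x \<in> E" "y \<in> E" "y' \<in> E" "\<forall>x\<in>E. \<forall>y\<in>E. x + y \<in> E"
    then show ?thesis
      by (intro exI[of _ "{(x, y + y'), (x, y), (x, y')}"]) (auto simp: delta_def)
  next
    fix x y a assume "f = (\<lambda>q. delta (rw x a, y) q - delta (x, lw a y) q)"
      and "x \<in> E" "y \<in> E" "\<forall>x\<in>E. \<forall>a. lw a x \<in> E" "\<forall>x\<in>E. \<forall>a. rw x a \<in> E"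
    then show ?thesis
      by (intro exI[of _ "{(rw x a, y), (x, lw a y)}"]) (auto simp: delta_def)
  qed
  then have "finite {q. f q \<noteq> 0}" "{q. f q \<noteq> 0} \<subseteq> E \<times> E"
    by (auto intro: finite_subset)
  then show ?thesis
    using tensor_product assms unfolding is_tensor_product_def by (auto intro: zspan_gen)
qed

lemma tens_add_left:
  assumes "x \<in> E" "x' \<in> E" "y \<in> E"
  shows "tens (x + x') y = tens x y + tens x' y"
proof -
  have "(\<lambda>q. delta (x + x', y) q - delta (x, y) q - delta (x', y) q) \<in> tensor_rels lw rw E"
    unfolding tensor_rels_def using assms by blast
  then have "tensor_lift tact tens (\<lambda>q. delta (x + x', y) q - delta (x, y) q - delta (x', y) q) = 0"
    by (rule tensor_lift_relation)
  then have "tens (x + x') y - tens x y - tens x' y = 0"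
    by (simp only: tensor_lift_delta_diff3 fst_conv snd_conv)
  then show ?thesis
    by (simp add: algebra_simps)
qed

lemma tens_add_right:
  assumes "x \<in> E" "y \<in> E" "y' \<in> E"
  shows "tens x (y + y') = tens x y + tens x y'"
proof -
  have "(\<lambda>q. delta (x, y + y') q - delta (x, y) q - delta (x, y') q) \<in> tensor_rels lw rw E"
    unfolding tensor_rels_def using assms by blast
  then have "tensor_lift tact tens (\<lambda>q. delta (x, y + y') q - delta (x, y) q - delta (x, y') q) = 0"
    by (rule tensor_lift_relation)
  then have "tens x (y + y') - tens x y - tens x y' = 0"
    by (simp only: tensor_lift_delta_diff3 fst_conv snd_conv)
  then show ?thesis
    by (simp add: algebra_simps)
qed

lemma tens_balanced:
  assumes "x \<in> E" "y \<in> E"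
  shows "tens (rw x a) y = tens x (lw a y)"
proof -
  have "(\<lambda>q. delta (rw x a, y) q - delta (x, lw a y) q) \<in> tensor_rels lw rw E"
    unfolding tensor_rels_def using assms by blast
  then have "tensor_lift tact tens (\<lambda>q. delta (rw x a, y) q - delta (x, lw a y) q) = 0"
    by (rule tensor_lift_relation)
  then show ?thesis
    by (simp add: tensor_lift_delta_diff)
qed

lemma tens_zero_right: "x \<in> E \<Longrightarrow> tens x 0 = 0"
  using tens_add_right[of x 0 0] sub_bimodule by (simp add: sub_bimodule_def)

lemma tens_sum_left:
  "(\<And>i. i \<in> I \<Longrightarrow> x i \<in> E) \<Longrightarrow> y \<in> E \<Longrightarrow> tens (\<Sum>i\<in>I. x i) y = (\<Sum>i\<in>I. tens (x i) y)"
proof (induction I rule: infinite_finite_induct)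
  case (insert i I)
  then have "(\<Sum>i\<in>I. x i) \<in> E"
    by (intro sub_bimodule_sum[OF sub_bimodule]) auto
  with insert show ?case
    by (simp add: tens_add_left)
qed (use tens_add_left[of 0 0 y] sub_bimodule in \<open>auto simp: sub_bimodule_def\<close>)

(* Integer coefficients of a formal combination are absorbed into the right factor. *)
lemma tensor_induct [case_names zero tens add]:
  assumes zero: "P 0" and tens: "\<And>x y. x \<in> E \<Longrightarrow> y \<in> E \<Longrightarrow> P (tens x y)"
    and add: "\<And>s t. P s \<Longrightarrow> P t \<Longrightarrow> P (s + t)"
  shows "P t"
proof -
  obtain f where fin: "finite {q. f q \<noteq> 0}" and supp: "{q. f q \<noteq> 0} \<subseteq> E \<times> E"
    and t: "t = tensor_lift tact tens f"
    using tensor_product unfolding is_tensor_product_def by (elim conjE) blast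
  have t_sum: "t = (\<Sum>q\<in>{q. f q \<noteq> 0}. tens (fst q) (rw (snd q) (of_int (f q))))"
    unfolding t tensor_lift_def using supp by (intro sum.cong) (auto simp: tens_right_action)
  have "P (\<Sum>q\<in>Q. tens (fst q) (rw (snd q) (of_int (f q))))" if "finite Q" "Q \<subseteq> E \<times> E" for Q
    using that
  proof (induction Q rule: finite_induct)
    case (insert q Q)
    then have "P (tens (fst q) (rw (snd q) (of_int (f q))))"
      using sub_bimodule by (intro tens) (auto simp: sub_bimodule_def)
    with insert show ?case
      by (simp add: add)
  qed (simp add: zero)
  then show ?thesis
    using fin supp t_sum by simp
qed

end

locale differential_calculus =
  fixes cemb :: "complex \<Rightarrow> 'a::ring_1"
    and lw :: "'a \<Rightarrow> 'w::ab_group_add \<Rightarrow> 'w" and rw :: "'w \<Rightarrow> 'a \<Rightarrow> 'w"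
    and deg :: "nat \<Rightarrow> 'w set" and iota :: "'a \<Rightarrow> 'w"
    and wedge :: "'w \<Rightarrow> 'w \<Rightarrow> 'w" and d :: "'w \<Rightarrow> 'w"
  assumes diff_calculus: "diff_calculus cemb lw rw deg iota wedge d"
begin

lemma bimodule: "bimodule cemb lw rw"
  using diff_calculus unfolding diff_calculus_def by (elim conjE) fast

sublocale rw: additive "\<lambda>m. rw m a" for a
  using bimodule_right_action_additive[OF bimodule] .

lemma deg_sub_bimodule: "sub_bimodule lw rw (deg j)"
  using diff_calculus unfolding diff_calculus_def by (elim conjE) fast

lemma deg_zero: "0 \<in> deg j"
  using deg_sub_bimodule by (simp add: sub_bimodule_def)

lemma deg_add: "x \<in> deg j \<Longrightarrow> y \<in> deg j \<Longrightarrow> x + y \<in> deg j"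
  using deg_sub_bimodule by (simp add: sub_bimodule_def)

lemma deg_rw: "x \<in> deg j \<Longrightarrow> rw x a \<in> deg j"
  using deg_sub_bimodule by (simp add: sub_bimodule_def)

lemma deg_lw: "x \<in> deg j \<Longrightarrow> lw a x \<in> deg j"
  using deg_sub_bimodule by (simp add: sub_bimodule_def)

lemma iota_in_deg0: "iota a \<in> deg 0"
  using diff_calculus unfolding diff_calculus_def bij_betw_def by (elim conjE) fast

lemma iota_add: "iota (a + b) = iota a + iota b"
  using diff_calculus unfolding diff_calculus_def by (elim conjE) fast

lemma iota_mult: "iota (a * b) = rw (iota a) b"
  using diff_calculus unfolding diff_calculus_def by (elim conjE) fast

lemma wedge_iota_left: "wedge (iota a) w = lw a w"
  using diff_calculus unfolding diff_calculus_def by (elim conjE) fast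

lemma wedge_iota_right: "wedge w (iota a) = rw w a"
  using diff_calculus unfolding diff_calculus_def by (elim conjE) fast

lemma wedge_rw: "wedge x (rw y a) = rw (wedge x y) a"
  using diff_calculus unfolding diff_calculus_def by (elim conjE) fast

lemma wedge_in_deg: "x \<in> deg j \<Longrightarrow> y \<in> deg k \<Longrightarrow> wedge x y \<in> deg (j + k)"
  using diff_calculus unfolding diff_calculus_def by (elim conjE) fast

lemma d_add: "d (x + y) = d x + d y"
  using diff_calculus unfolding diff_calculus_def by (elim conjE) fast

lemma d_rw_complex: "d (rw x (cemb z)) = rw (d x) (cemb z)"
  using diff_calculus unfolding diff_calculus_def by (elim conjE) fast

lemma d_in_deg: "x \<in> deg j \<Longrightarrow> d x \<in> deg (Suc j)"
  using diff_calculus unfolding diff_calculus_def by (elim conjE) fast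

lemma d_wedge: "x \<in> deg j \<Longrightarrow>
    d (wedge x y) = wedge (d x) y + (if even j then wedge x (d y) else - wedge x (d y))"
  using diff_calculus unfolding diff_calculus_def by (elim conjE) fast

lemma d_iota_in_deg1: "d (iota a) \<in> deg 1"
  using d_in_deg[OF iota_in_deg0] by simp

lemma d_iota_mult: "d (iota (b * a)) = rw (d (iota b)) a + lw b (d (iota a))"
proof -
  have "iota (b * a) = wedge (iota b) (iota a)"
    by (simp add: iota_mult wedge_iota_right)
  then show ?thesis
    using d_wedge[OF iota_in_deg0, of b "iota a"] by (simp add: wedge_iota_right wedge_iota_left)
qed

lemma d_iota_one: "d (iota 1) = 0"
proof -
  have "d (iota 1) = d (iota (1 * 1))" by simp
  also have "\<dots> = rw (d (iota 1)) 1 + lw 1 (d (iota 1))"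
    by (rule d_iota_mult)
  also have "\<dots> = d (iota 1) + d (iota 1)"
    by (simp add: bimodule_right_one[OF bimodule] bimodule_left_one[OF bimodule])
  finally show ?thesis by simp
qed

lemma d_iota_complex: "d (iota (cemb z)) = 0"
proof -
  have "iota (cemb z) = rw (iota 1) (cemb z)"
    using iota_mult[of 1 "cemb z"] by simp
  then show ?thesis
    by (simp add: d_rw_complex d_iota_one rw.zero)
qed

lemma d_rw_odd: "x \<in> deg j \<Longrightarrow> odd j \<Longrightarrow> d (rw x a) = rw (d x) a - wedge x (d (iota a))"
  using d_wedge[of x j "iota a"] by (simp add: wedge_iota_right)

end

definition grassmann_connection ::
  "('w \<Rightarrow> 'w \<Rightarrow> 't::ab_group_add) \<Rightarrow> ('w \<Rightarrow> 'w) \<Rightarrow> ('a \<Rightarrow> 'w) \<Rightarrow> nat \<Rightarrow> (nat \<Rightarrow> 'w) \<Rightarrow>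
    ('w \<Rightarrow> nat \<Rightarrow> 'a) \<Rightarrow> 'w \<Rightarrow> 't"
  where "grassmann_connection tens d iota n e c x = (\<Sum>i<n. tens (e i) (d (iota (c x i))))"

locale calculus_with_tensor_square = differential_calculus +
  fixes tlact tact tens wt
  assumes tensor_product_deg1: "is_tensor_product cemb lw rw (deg 1) tlact tact tens"
    and induced_wedge: "induced_wedge (deg 1) tens wedge wt"
begin

sublocale tensor_square cemb lw rw "deg 1" tlact tact tens
  using tensor_product_deg1 deg_sub_bimodule by unfold_locales

sublocale wt: additive wt
  using induced_wedge by unfold_locales (simp add: induced_wedge_def)

lemma wt_tens: "x \<in> deg 1 \<Longrightarrow> y \<in> deg 1 \<Longrightarrow> wt (tens x y) = wedge x y"
  using induced_wedge by (simp add: induced_wedge_def)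

lemma wt_in_deg2: "wt t \<in> deg 2"
proof (induction t rule: tensor_induct)
  case (tens x y)
  then show ?case
    using wedge_in_deg[of x 1 y 1] by (simp add: wt_tens numeral_2_eq_2)
qed (simp_all add: wt.zero wt.add deg_zero deg_add)

lemma wt_right_action: "wt (tact t a) = rw (wt t) a"
proof (induction t rule: tensor_induct)
  case (tens x y)
  then show ?case
    by (simp add: tens_right_action wt_tens deg_rw wedge_rw)
qed (simp_all add: tact.zero tact.add wt.zero wt.add rw.zero rw.add)

lemma connectionI:
  assumes "\<And>x y. x \<in> deg 1 \<Longrightarrow> y \<in> deg 1 \<Longrightarrow> nabla (x + y) = nabla x + nabla y"
    and "\<And>x a. x \<in> deg 1 \<Longrightarrow> nabla (rw x a) = tact (nabla x) a + tens x (d (iota a))"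
  shows "connection cemb rw (deg 1) iota d tact tens nabla"
  using assms by (simp add: connection_def d_iota_complex tens_zero_right)

lemma torsion_in_deg2: "x \<in> deg 1 \<Longrightarrow> torsion d wt nabla x \<in> deg 2"
  using d_in_deg[of x 1] wt_in_deg2 by (simp add: torsion_def deg_add numeral_2_eq_2)

context
  fixes n e c
  assumes basis: "dual_basis rw (deg 1) n e c"
begin

lemma dual_basis_in_deg1: "i \<in> {..<n} \<Longrightarrow> e i \<in> deg 1"
  using basis unfolding dual_basis_def by blast

lemma grassmann_connection_add:
  assumes x: "x \<in> deg 1" and y: "y \<in> deg 1"
  shows "grassmann_connection tens d iota n e c (x + y) =
    grassmann_connection tens d iota n e c x + grassmann_connection tens d iota n e c y"
proof -
  have "c (x + y) i = c x i + c y i" for i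
    using basis x y unfolding dual_basis_def by blast
  then have "grassmann_connection tens d iota n e c (x + y) =
      (\<Sum>i<n. tens (e i) (d (iota (c x i))) + tens (e i) (d (iota (c y i))))"
    unfolding grassmann_connection_def
    by (intro sum.cong refl)
      (simp add: iota_add d_add tens_add_right[OF dual_basis_in_deg1 d_iota_in_deg1 d_iota_in_deg1])
  then show ?thesis
    by (simp add: grassmann_connection_def sum.distrib)
qed

lemma grassmann_connection_right_action:
  assumes x: "x \<in> deg 1"
  shows "grassmann_connection tens d iota n e c (rw x a) =
    tact (grassmann_connection tens d iota n e c x) a + tens x (d (iota a))"
proof -
  have "c (rw x a) i = c x i * a" for i
    using basis x unfolding dual_basis_def by blast
  then have "grassmann_connection tens d iota n e c (rw x a) =
      (\<Sum>i<n. tens (e i) (rw (d (iota (c x i))) a + lw (c x i) (d (iota a))))"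
    unfolding grassmann_connection_def by (simp add: d_iota_mult)
  also have "\<dots> = (\<Sum>i<n. tact (tens (e i) (d (iota (c x i)))) a + tens (rw (e i) (c x i)) (d (iota a)))"
  proof (intro sum.cong refl)
    fix i assume "i \<in> {..<n}"
    then have ei: "e i \<in> deg 1" by (rule dual_basis_in_deg1)
    show "tens (e i) (rw (d (iota (c x i))) a + lw (c x i) (d (iota a))) =
        tact (tens (e i) (d (iota (c x i)))) a + tens (rw (e i) (c x i)) (d (iota a))"
      using tens_add_right[OF ei deg_rw[OF d_iota_in_deg1] deg_lw[OF d_iota_in_deg1]]
      by (simp add: tens_right_action[OF ei d_iota_in_deg1] tens_balanced[OF ei d_iota_in_deg1])
  qed
  also have "\<dots> = tact (grassmann_connection tens d iota n e c x) a +
      tens (\<Sum>i<n. rw (e i) (c x i)) (d (iota a))"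
  proof -
    have "tens (\<Sum>i<n. rw (e i) (c x i)) (d (iota a)) = (\<Sum>i<n. tens (rw (e i) (c x i)) (d (iota a)))"
      by (rule tens_sum_left[OF deg_rw[OF dual_basis_in_deg1] d_iota_in_deg1])
    then show ?thesis
      by (simp add: grassmann_connection_def sum.distrib tact.sum)
  qed
  also have "(\<Sum>i<n. rw (e i) (c x i)) = x"
    using basis x unfolding dual_basis_def by auto
  finally show ?thesis .
qed

lemma grassmann_connection_is_connection:
  "connection cemb rw (deg 1) iota d tact tens (grassmann_connection tens d iota n e c)"
  by (intro connectionI grassmann_connection_add grassmann_connection_right_action)

end

context
  fixes nabla
  assumes connection: "connection cemb rw (deg 1) iota d tact tens nabla"
begin

lemma torsion_add:
  "x \<in> deg 1 \<Longrightarrow> y \<in> deg 1 \<Longrightarrow> torsion d wt nabla (x + y) = torsion d wt nabla x + torsion d wt nabla y"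
  using connection by (simp add: connection_def torsion_def wt.add d_add)

(* The term x (x) da of the Leibniz rule of nabla cancels the term - x wedge da of d (x a). *)
lemma torsion_right_action:
  assumes "x \<in> deg 1"
  shows "torsion d wt nabla (rw x a) = rw (torsion d wt nabla x) a"
proof -
  have "wt (nabla (rw x a)) = rw (wt (nabla x)) a + wedge x (d (iota a))"
    using connection assms
    by (simp add: connection_def wt.add wt_right_action wt_tens[OF assms d_iota_in_deg1])
  moreover have "d (rw x a) = rw (d x) a - wedge x (d (iota a))"
    using assms by (simp add: d_rw_odd)
  ultimately show ?thesis
    by (simp add: torsion_def rw.add)
qed

theorem torsion_free_correction:
  assumes s_add: "\<forall>x\<in>deg 2. \<forall>y\<in>deg 2. s (x + y) = s x + s y"
    and s_right_action: "\<forall>x\<in>deg 2. \<forall>a. s (rw x a) = tact (s x) a"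
    and s_section: "\<forall>x\<in>deg 2. wt (s x) = x"
  defines "nabla0 \<equiv> \<lambda>x. nabla x - s (torsion d wt nabla x)"
  shows "connection cemb rw (deg 1) iota d tact tens nabla0"
    and "torsionless (deg 1) d wt nabla0"
proof -
  show "connection cemb rw (deg 1) iota d tact tens nabla0"
  proof (rule connectionI)
    fix x y assume "x \<in> deg 1" "y \<in> deg 1"
    then show "nabla0 (x + y) = nabla0 x + nabla0 y"
      using connection s_add torsion_in_deg2
      by (simp add: nabla0_def connection_def torsion_add)
  next
    fix x a assume "x \<in> deg 1"
    then show "nabla0 (rw x a) = tact (nabla0 x) a + tens x (d (iota a))"
      using connection s_right_action torsion_in_deg2
      by (simp add: nabla0_def connection_def torsion_right_action tact.diff)
  qed
  show "torsionless (deg 1) d wt nabla0"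
    unfolding torsionless_def
  proof
    fix x assume "x \<in> deg 1"
    then have "wt (s (torsion d wt nabla x)) = torsion d wt nabla x"
      using s_section torsion_in_deg2 by blast
    then show "torsion d wt nabla0 x = 0"
      by (simp add: nabla0_def wt.diff torsion_def)
  qed
qed

end

end

theorem theorem3p3:
  fixes cemb :: "complex \<Rightarrow> 'a::ring_1"
    and lw :: "'a \<Rightarrow> 'w::ab_group_add \<Rightarrow> 'w" and rw :: "'w \<Rightarrow> 'a \<Rightarrow> 'w"
    and deg :: "nat \<Rightarrow> 'w set" and iota :: "'a \<Rightarrow> 'w"
    and wedge :: "'w \<Rightarrow> 'w \<Rightarrow> 'w" and d :: "'w \<Rightarrow> 'w"
    and tlact :: "'a \<Rightarrow> 't::ab_group_add \<Rightarrow> 't" and tact :: "'t \<Rightarrow> 'a \<Rightarrow> 't"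
    and tens :: "'w \<Rightarrow> 'w \<Rightarrow> 't" and wt :: "'t \<Rightarrow> 'w"
  assumes "diff_calculus cemb lw rw deg iota wedge d"
    and "fg_projective_right rw (deg 1)"
    and "is_tensor_product cemb lw rw (deg 1) tlact tact tens"
    and "induced_wedge (deg 1) tens wedge wt"
    and "right_split rw tact (deg 2) wt"
  shows "\<exists>nabla0 :: 'w \<Rightarrow> 't.
           connection cemb rw (deg 1) iota d tact tens nabla0 \<and> torsionless (deg 1) d wt nabla0"
proof -
  interpret calculus_with_tensor_square cemb lw rw deg iota wedge d tlact tact tens wt
    using assms(1,3,4) by (intro calculus_with_tensor_square.intro differential_calculus.intro
      calculus_with_tensor_square_axioms.intro)
  obtain n e c where "dual_basis rw (deg 1) n e c"
    using fg_projective_right_dual_basis[OF assms(2)] .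
  then have grassmann: "connection cemb rw (deg 1) iota d tact tens (grassmann_connection tens d iota n e c)"
    by (rule grassmann_connection_is_connection)
  obtain s where "\<forall>x\<in>deg 2. \<forall>y\<in>deg 2. s (x + y) = s x + s y"
    and "\<forall>x\<in>deg 2. \<forall>a. s (rw x a) = tact (s x) a" and "\<forall>x\<in>deg 2. wt (s x) = x"
    using assms(5) unfolding right_split_def by (elim exE conjE)
  then show ?thesis
    using torsion_free_correction[OF grassmann] by blast
qed

end
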